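(* Let $n\ge1$ and let $T\in\mathbb R[x,u_0,\dots,u_n]$ be nonzero. Write $T=Q(x,v_0,\dots,v_n)$ with $Q$ a real polynomial, and let $m$ be the degree of $Q$ in the variable $x$. Then $T(\mathcal P_n)\subset\mathcal P_m$ and $T(\mathcal P_n)\not\subset\mathcal P_{m-1}$; i.e. $T$ has deficiency $n-m$ relative to $\mathcal P_n$.
   Context: Elements $P\in\mathbb R[x,u_0,\dots,u_n]$ act on smooth $f$ by $P[f](x)=P(x,f(x),f'(x),\dots,f^{(n)}(x))$. $\mathcal P_s$ is the space of real polynomials in $x$ of degree $\le s$ ($\mathcal P_s=\{0\}$ for $s<0$). Deficiency $m$ relative to $\mathcal P_n$ means $T(\mathcal P_n)\subset\mathcal P_{n-m}$ but $T(\mathcal P_n)\not\subset\mathcal P_{n-m-1}$. For $j=0,\dots,n$, $v_j=\sum_{i=0}^{n-j}(-1)^i\frac{x^i}{i!}u_{i+j}$; the elements $x,v_0,\dots,v_n$ freely generate the algebra $\mathbb R[x,u_0,\dots,u_n]$, so $Q$ is unique. *)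

theory Defs
  imports "HOL-Library.Poly_Mapping" "HOL-Computational_Algebra.Polynomial"
begin

text \<open>Variable index 0 stands for x, index Suc i for u_i (resp. v_i for Q).\<close>

type_synonym mpoly = "(nat \<Rightarrow>\<^sub>0 nat) \<Rightarrow>\<^sub>0 real"

definition mvar :: "nat \<Rightarrow> mpoly" where
  "mvar i = Poly_Mapping.single (Poly_Mapping.single i 1) 1"

definition mconst :: "real \<Rightarrow> mpoly" where
  "mconst c = Poly_Mapping.single 0 c"

definition vars_le :: "nat \<Rightarrow> mpoly \<Rightarrow> bool" where
  "vars_le k P \<longleftrightarrow> (\<forall>m\<in>Poly_Mapping.keys P. \<forall>i\<in>Poly_Mapping.keys m. i \<le> k)"

definition msubst :: "mpoly \<Rightarrow> (nat \<Rightarrow> mpoly) \<Rightarrow> mpoly" where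
  "msubst Q \<sigma> = (\<Sum>m\<in>Poly_Mapping.keys Q. mconst (Poly_Mapping.lookup Q m) * (\<Prod>i\<in>Poly_Mapping.keys m. \<sigma> i ^ Poly_Mapping.lookup m i))"

definition meval :: "mpoly \<Rightarrow> (nat \<Rightarrow> real) \<Rightarrow> real" where
  "meval P a = (\<Sum>m\<in>Poly_Mapping.keys P. Poly_Mapping.lookup P m * (\<Prod>i\<in>Poly_Mapping.keys m. a i ^ Poly_Mapping.lookup m i))"

definition vpoly :: "nat \<Rightarrow> nat \<Rightarrow> mpoly" where
  "vpoly n j = (\<Sum>i=0..n-j. mconst ((-1)^i / fact i) * mvar 0 ^ i * mvar (Suc (i+j)))"

definition degx :: "mpoly \<Rightarrow> nat" where
  "degx P = Max (insert 0 ((\<lambda>m. Poly_Mapping.lookup m 0) ` Poly_Mapping.keys P))"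

definition act :: "mpoly \<Rightarrow> real poly \<Rightarrow> real \<Rightarrow> real" where
  "act P f x = meval P (\<lambda>i. if i = 0 then x else poly ((pderiv ^^ (i - 1)) f) x)"

text \<open>Membership of a function in P_s (real polynomials of degree \<le> s; {0} if s < 0).\<close>
definition inP :: "int \<Rightarrow> (real \<Rightarrow> real) \<Rightarrow> bool" where
  "inP s g \<longleftrightarrow> (\<exists>q. g = poly q \<and> (if s < 0 then q = 0 else Polynomial.degree q \<le> nat s))"

definition maps_into :: "mpoly \<Rightarrow> nat \<Rightarrow> int \<Rightarrow> bool" where
  "maps_into T n s \<longleftrightarrow> (\<forall>f::real poly. Polynomial.degree f \<le> n \<longrightarrow> inP s (act T f))"

end

theory Submission
  imports Defs
begin

text \<open>For f of degree at most n, Taylor's formula for f^(j) expanded at x and evaluated at 0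
shows that v_j[f] is the constant f^(j)(0). Hence T[f](x) = Q(x, f(0), f'(0), ..., f^(n)(0))
is a polynomial in x of degree at most m whose coefficient of x^m is the coefficient of x^m
in Q, a nonzero polynomial in v_0, ..., v_n, evaluated at the jet (f(0), ..., f^(n)(0)).
A nonzero real polynomial has a non-root, and the jet at 0 of a polynomial of degree at
most n can be prescribed arbitrarily, so some f makes T[f] of degree exactly m.\<close>

section \<open>Evaluation of polynomials\<close>

definition monom_eval :: "(nat \<Rightarrow>\<^sub>0 nat) \<Rightarrow> (nat \<Rightarrow> real) \<Rightarrow> real" where
  "monom_eval m a = (\<Prod>i\<in>Poly_Mapping.keys m. a i ^ Poly_Mapping.lookup m i)"

lemma meval_eq_sum_monom_eval:
  "meval P a = (\<Sum>m\<in>Poly_Mapping.keys P. Poly_Mapping.lookup P m * monom_eval m a)"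
  by (simp add: meval_def monom_eval_def)

lemma monom_eval_superset:
  assumes "finite S" "Poly_Mapping.keys m \<subseteq> S"
  shows "monom_eval m a = (\<Prod>i\<in>S. a i ^ Poly_Mapping.lookup m i)"
  unfolding monom_eval_def using assms
  by (intro prod.mono_neutral_left) (auto simp: in_keys_iff)

lemma monom_eval_add: "monom_eval (m1 + m2) a = monom_eval m1 a * monom_eval m2 a"
proof -
  let ?S = "Poly_Mapping.keys m1 \<union> Poly_Mapping.keys m2"
  have "monom_eval (m1 + m2) a = (\<Prod>i\<in>?S. a i ^ Poly_Mapping.lookup (m1 + m2) i)"
    by (rule monom_eval_superset) (auto simp: keys_add)
  also have "\<dots> = (\<Prod>i\<in>?S. a i ^ Poly_Mapping.lookup m1 i * a i ^ Poly_Mapping.lookup m2 i)"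
    by (simp add: lookup_add power_add)
  also have "\<dots> = monom_eval m1 a * monom_eval m2 a"
    by (simp add: prod.distrib monom_eval_superset[of ?S])
  finally show ?thesis .
qed

lemma monom_eval_single [simp]: "monom_eval (Poly_Mapping.single i k) a = a i ^ k"
  by (simp add: monom_eval_def)

lemma meval_superset:
  assumes "finite S" "Poly_Mapping.keys P \<subseteq> S"
  shows "meval P a = (\<Sum>m\<in>S. Poly_Mapping.lookup P m * monom_eval m a)"
  unfolding meval_eq_sum_monom_eval using assms
  by (intro sum.mono_neutral_left) (auto simp: in_keys_iff)

lemma meval_single [simp]: "meval (Poly_Mapping.single m c) a = c * monom_eval m a"
  by (simp add: meval_eq_sum_monom_eval)

lemma meval_add: "meval (P + Q) a = meval P a + meval Q a"
proof -
  let ?S = "Poly_Mapping.keys P \<union> Poly_Mapping.keys Q"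
  have "meval (P + Q) a = (\<Sum>m\<in>?S. Poly_Mapping.lookup (P + Q) m * monom_eval m a)"
    by (rule meval_superset) (auto simp: keys_add)
  then show ?thesis
    by (simp add: lookup_add distrib_right sum.distrib meval_superset[of ?S])
qed

lemma meval_zero [simp]: "meval 0 a = 0"
  by (simp add: meval_def)

lemma meval_sum: "meval (sum f A) a = (\<Sum>x\<in>A. meval (f x) a)"
  by (induction A rule: infinite_finite_induct) (auto simp: meval_add)

lemma sum_single_lookup:
  "P = (\<Sum>m\<in>Poly_Mapping.keys P. Poly_Mapping.single m (Poly_Mapping.lookup P m))"
  by (rule poly_mapping_eqI)
    (auto simp: lookup_sum lookup_single when_def in_keys_iff intro: sum.neutral)

lemma meval_mult: "meval (P * Q) a = meval P a * meval Q a"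
proof -
  have "P * Q = (\<Sum>m\<in>Poly_Mapping.keys P. \<Sum>m'\<in>Poly_Mapping.keys Q.
      Poly_Mapping.single (m + m') (Poly_Mapping.lookup P m * Poly_Mapping.lookup Q m'))"
    by (subst sum_single_lookup[of P], subst sum_single_lookup[of Q])
      (simp add: sum_product mult_single)
  then have "meval (P * Q) a = (\<Sum>m\<in>Poly_Mapping.keys P. \<Sum>m'\<in>Poly_Mapping.keys Q.
      (Poly_Mapping.lookup P m * Poly_Mapping.lookup Q m') * (monom_eval m a * monom_eval m' a))"
    by (simp add: meval_sum monom_eval_add)
  also have "\<dots> = meval P a * meval Q a"
    by (simp add: meval_eq_sum_monom_eval sum_product mult_ac)
  finally show ?thesis .
qed

lemma meval_one [simp]: "meval 1 a = 1"
  by (simp flip: single_one add: monom_eval_def)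

lemma meval_power: "meval (P ^ k) a = meval P a ^ k"
  by (induction k) (auto simp: meval_mult)

lemma meval_prod: "meval (prod f A) a = (\<Prod>x\<in>A. meval (f x) a)"
  by (induction A rule: infinite_finite_induct) (auto simp: meval_mult)

lemma meval_mvar [simp]: "meval (mvar i) a = a i"
  by (simp add: mvar_def)

lemma meval_mconst [simp]: "meval (mconst c) a = c"
  by (simp add: mconst_def monom_eval_def)

lemma meval_msubst: "meval (msubst Q \<sigma>) a = meval Q (\<lambda>k. meval (\<sigma> k) a)"
  by (simp add: msubst_def meval_sum meval_mult meval_prod meval_power) (simp add: meval_def)

section \<open>Isolating one variable\<close>

definition vars :: "mpoly \<Rightarrow> nat set" where
  "vars R = (\<Union>m\<in>Poly_Mapping.keys R. Poly_Mapping.keys m)"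

lemma finite_vars: "finite (vars R)"
  by (simp add: vars_def)

lemma meval_cong_vars: "(\<And>i. i \<in> vars R \<Longrightarrow> a i = b i) \<Longrightarrow> meval R a = meval R b"
  unfolding meval_def vars_def by (intro sum.cong prod.cong arg_cong2[where f = times] refl) (metis UN_I)

definition remove_key :: "nat \<Rightarrow> (nat \<Rightarrow>\<^sub>0 nat) \<Rightarrow> (nat \<Rightarrow>\<^sub>0 nat)" where
  "remove_key v m = Poly_Mapping.update v 0 m"

lemma lookup_remove_key:
  "Poly_Mapping.lookup (remove_key v m) i = (if i = v then 0 else Poly_Mapping.lookup m i)"
  by (simp add: remove_key_def lookup_update)

lemma keys_remove_key: "Poly_Mapping.keys (remove_key v m) = Poly_Mapping.keys m - {v}"
  by (simp add: remove_key_def keys_update)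

lemma remove_key_eq_iff:
  assumes "Poly_Mapping.lookup m1 v = Poly_Mapping.lookup m2 v"
  shows "remove_key v m1 = remove_key v m2 \<longleftrightarrow> m1 = m2"
proof
  assume "remove_key v m1 = remove_key v m2"
  then have "Poly_Mapping.lookup (remove_key v m1) i = Poly_Mapping.lookup (remove_key v m2) i"
    for i by simp
  with assms show "m1 = m2"
    by (intro poly_mapping_eqI) (metis lookup_remove_key)
qed simp

lemma monom_eval_remove_key:
  "monom_eval m a = monom_eval (remove_key v m) a * a v ^ Poly_Mapping.lookup m v"
proof -
  let ?S = "insert v (Poly_Mapping.keys m)"
  have "monom_eval m a = (\<Prod>i\<in>?S. a i ^ Poly_Mapping.lookup m i)"
    by (rule monom_eval_superset) auto
  also have "\<dots> = a v ^ Poly_Mapping.lookup m v * (\<Prod>i\<in>?S - {v}. a i ^ Poly_Mapping.lookup m i)"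
    by (rule prod.remove) auto
  also have "(\<Prod>i\<in>?S - {v}. a i ^ Poly_Mapping.lookup m i) = monom_eval (remove_key v m) a"
    by (subst monom_eval_superset[of "?S - {v}"]) (auto simp: keys_remove_key lookup_remove_key)
  finally show ?thesis by simp
qed

definition poly_in_var :: "mpoly \<Rightarrow> nat \<Rightarrow> (nat \<Rightarrow> real) \<Rightarrow> real poly" where
  "poly_in_var R v c = (\<Sum>m\<in>Poly_Mapping.keys R.
      monom (Poly_Mapping.lookup R m * monom_eval (remove_key v m) c) (Poly_Mapping.lookup m v))"

definition coeff_in_var :: "mpoly \<Rightarrow> nat \<Rightarrow> nat \<Rightarrow> mpoly" where
  "coeff_in_var R v k = (\<Sum>m\<in>{m\<in>Poly_Mapping.keys R. Poly_Mapping.lookup m v = k}.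
      Poly_Mapping.single (remove_key v m) (Poly_Mapping.lookup R m))"

lemma poly_poly_in_var: "poly (poly_in_var R v c) (c v) = meval R c"
  unfolding poly_in_var_def poly_sum poly_monom meval_eq_sum_monom_eval
  by (intro sum.cong refl) (subst (2) monom_eval_remove_key[where v = v], simp add: mult_ac)

lemma poly_in_var_fun_upd: "poly_in_var R v (c(v := t)) = poly_in_var R v c"
  unfolding poly_in_var_def monom_eval_def by (intro sum.cong prod.cong) (auto simp: keys_remove_key)

lemma coeff_poly_in_var: "coeff (poly_in_var R v c) k = meval (coeff_in_var R v k) c"
  by (simp add: poly_in_var_def coeff_sum coeff_monom coeff_in_var_def meval_sum
      sum.inter_filter[symmetric] if_distrib[of "\<lambda>x. x = k"] cong: if_cong)

lemma lookup_coeff_in_var: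
  assumes "m \<in> Poly_Mapping.keys R"
  shows "Poly_Mapping.lookup (coeff_in_var R v (Poly_Mapping.lookup m v)) (remove_key v m)
    = Poly_Mapping.lookup R m"
  using assms
  by (simp add: coeff_in_var_def lookup_sum lookup_single when_def remove_key_eq_iff
      sum.delta[where a = m] eq_commute[of "remove_key v m"] cong: if_cong)

lemma coeff_in_var_nonzero:
  assumes "m \<in> Poly_Mapping.keys R"
  shows "coeff_in_var R v (Poly_Mapping.lookup m v) \<noteq> 0"
  using lookup_coeff_in_var[OF assms, of v] assms by (auto simp: in_keys_iff)

lemma vars_coeff_in_var: "vars (coeff_in_var R v k) \<subseteq> vars R - {v}"
proof
  fix i assume "i \<in> vars (coeff_in_var R v k)"
  then obtain m where m: "m \<in> Poly_Mapping.keys (coeff_in_var R v k)" "i \<in> Poly_Mapping.keys m"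
    by (auto simp: vars_def)
  from m(1) obtain m' where "m' \<in> Poly_Mapping.keys R"
      "m \<in> Poly_Mapping.keys (Poly_Mapping.single (remove_key v m') (Poly_Mapping.lookup R m'))"
    using keys_sum[of "\<lambda>m'. Poly_Mapping.single (remove_key v m') (Poly_Mapping.lookup R m')"
        "{m \<in> Poly_Mapping.keys R. Poly_Mapping.lookup m v = k}"]
    unfolding coeff_in_var_def by blast
  then have "m' \<in> Poly_Mapping.keys R" "m = remove_key v m'"
    by (auto split: if_splits)
  with m(2) show "i \<in> vars R - {v}" by (auto simp: vars_def keys_remove_key)
qed

lemma ex_meval_nonzero:
  assumes "R \<noteq> 0"
  shows "\<exists>c. meval R c \<noteq> 0"
  using assms
proof (induction "card (vars R)" arbitrary: R rule: less_induct)
  case less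
  show ?case
  proof (cases "vars R = {}")
    case True
    have "Poly_Mapping.keys R \<subseteq> {0}"
      using True by (auto simp: vars_def)
    moreover have "Poly_Mapping.keys R \<noteq> {}"
      using less.prems by simp
    ultimately have keys_R: "Poly_Mapping.keys R = {0}"
      by blast
    then have "meval R c = Poly_Mapping.lookup R 0" for c
      by (simp add: meval_eq_sum_monom_eval monom_eval_def)
    moreover have "Poly_Mapping.lookup R 0 \<noteq> 0"
      using keys_R by (simp flip: in_keys_iff)
    ultimately show ?thesis by auto
  next
    case False
    then obtain v where "v \<in> vars R" by blast
    obtain m where m: "m \<in> Poly_Mapping.keys R"
      using less.prems by (metis all_not_in_conv keys_eq_empty)
    define S where "S = coeff_in_var R v (Poly_Mapping.lookup m v)"
    have "vars S \<subset> vars R"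
      using vars_coeff_in_var[of R v] \<open>v \<in> vars R\<close> unfolding S_def by blast
    then have "card (vars S) < card (vars R)"
      by (intro psubset_card_mono finite_vars)
    moreover have "S \<noteq> 0"
      using coeff_in_var_nonzero[OF m] by (simp add: S_def)
    ultimately obtain c where "meval S c \<noteq> 0"
      using less.hyps by blast
    then have "coeff (poly_in_var R v c) (Poly_Mapping.lookup m v) \<noteq> 0"
      by (simp add: coeff_poly_in_var S_def)
    then have "poly_in_var R v c \<noteq> 0"
      by auto
    then obtain t where "poly (poly_in_var R v c) t \<noteq> 0"
      using poly_all_0_iff_0 by blast
    then have "poly (poly_in_var R v (c(v := t))) ((c(v := t)) v) \<noteq> 0"
      by (simp add: poly_in_var_fun_upd)
    then show ?thesis
      unfolding poly_poly_in_var by blast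
  qed
qed

lemma degree_poly_in_var_0_le_degx: "degree (poly_in_var Q 0 c) \<le> degx Q"
  unfolding poly_in_var_def degx_def
  by (intro degree_sum_le) (auto intro: order_trans[OF degree_monom_le])

lemma degx_attained:
  assumes "Q \<noteq> 0"
  shows "\<exists>m\<in>Poly_Mapping.keys Q. Poly_Mapping.lookup m 0 = degx Q"
proof -
  let ?S = "(\<lambda>m. Poly_Mapping.lookup m 0) ` Poly_Mapping.keys Q"
  have "?S \<noteq> {}" using assms by simp
  then have "degx Q \<in> ?S"
    unfolding degx_def by (simp add: Max_insert max_def Max_in)
  then show ?thesis by force
qed

section \<open>Jets and Taylor's formula\<close>

definition jet :: "real poly \<Rightarrow> real \<Rightarrow> nat \<Rightarrow> real" where
  "jet f x = (\<lambda>i. if i = 0 then x else poly ((pderiv ^^ (i - 1)) f) x)"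

lemma act_eq_meval_jet: "act P f x = meval P (jet f x)"
  by (simp add: act_def jet_def)

lemma poly_0_eq_taylor_sum:
  fixes g :: "real poly"
  assumes "degree g \<le> N"
  shows "poly g 0 = (\<Sum>i\<le>N. (-1)^i / fact i * x^i * poly ((pderiv ^^ i) g) x)"
proof (cases "x = 0")
  case True
  then show ?thesis by (simp add: sum.atMost_shift power_0_left)
next
  case False
  define d where "d m = poly ((pderiv ^^ m) g)" for m
  have derivs: "\<forall>m t. m < Suc N \<and> - \<bar>x\<bar> \<le> t \<and> t \<le> \<bar>x\<bar> \<longrightarrow> DERIV (d m) t :> d (Suc m) t"
    by (simp add: d_def)
  have "\<exists>t. (if 0 < x then 0 < t \<and> t < x else x < t \<and> t < 0) \<and>
      poly g 0 = (\<Sum>m<Suc N. d m x / fact m * (0 - x)^m) + d (Suc N) t / fact (Suc N) * (0 - x)^Suc N"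
    by (rule Taylor[OF _ _ derivs]) (simp_all add: d_def False)
  then obtain t where "poly g 0 = (\<Sum>m<Suc N. d m x / fact m * (0 - x)^m)
      + d (Suc N) t / fact (Suc N) * (0 - x)^Suc N"
    by blast
  moreover have "(pderiv ^^ Suc N) g = 0"
    using assms by (intro poly_eqI) (simp add: coeff_higher_pderiv coeff_eq_0 del: funpow.simps)
  then have "d (Suc N) t = 0"
    by (simp add: d_def del: funpow.simps)
  ultimately show ?thesis
    by (simp add: d_def power_minus' lessThan_Suc_atMost mult_ac)
qed

lemma meval_vpoly_jet:
  assumes "degree f \<le> n"
  shows "meval (vpoly n j) (jet f x) = poly ((pderiv ^^ j) f) 0"
proof -
  have "meval (vpoly n j) (jet f x)
      = (\<Sum>i\<le>n - j. (-1)^i / fact i * x^i * poly ((pderiv ^^ i) ((pderiv ^^ j) f)) x)"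
    by (simp add: vpoly_def meval_sum meval_mult meval_power jet_def funpow_add atLeast0AtMost)
  also have "\<dots> = poly ((pderiv ^^ j) f) 0"
    using assms by (intro poly_0_eq_taylor_sum[symmetric]) (simp add: degree_higher_pderiv)
  finally show ?thesis .
qed

lemma act_msubst_vpoly:
  assumes "degree f \<le> n"
  shows "act (msubst Q (\<lambda>k. if k = 0 then mvar 0 else vpoly n (k - 1))) f
    = poly (poly_in_var Q 0 (jet f 0))" (is "act (msubst Q ?\<sigma>) f = _")
proof
  fix x
  have "(\<lambda>k. meval (?\<sigma> k) (jet f x)) = (jet f 0)(0 := x)"
    using meval_vpoly_jet[OF assms] by (auto simp: jet_def)
  then have "act (msubst Q ?\<sigma>) f x = meval Q ((jet f 0)(0 := x))"
    by (simp add: act_eq_meval_jet meval_msubst)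
  also have "\<dots> = poly (poly_in_var Q 0 (jet f 0)) x"
    by (metis fun_upd_same poly_in_var_fun_upd poly_poly_in_var)
  finally show "act (msubst Q ?\<sigma>) f x = poly (poly_in_var Q 0 (jet f 0)) x" .
qed

lemma ex_poly_with_jet:
  "\<exists>f. degree f \<le> n \<and> (\<forall>k\<in>{1..Suc n}. jet f 0 k = c k)"
proof -
  define f where "f = (\<Sum>j\<le>n. monom (c (Suc j) / fact j) j)"
  have "degree f \<le> n"
    unfolding f_def by (intro degree_sum_le) (auto intro: order_trans[OF degree_monom_le])
  moreover have "jet f 0 k = c k" if "k \<in> {1..Suc n}" for k
  proof -
    have "jet f 0 k = fact (k - 1) * coeff f (k - 1)"
      using that by (simp add: jet_def poly_0_coeff_0 coeff_higher_pderiv pochhammer_fact)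
    then show ?thesis
      using that by (auto simp: f_def coeff_sum)
  qed
  ultimately show ?thesis by blast
qed

lemma ex_poly_coeff_degx_nonzero:
  assumes "vars_le (Suc n) Q" "Q \<noteq> 0"
  shows "\<exists>f. degree f \<le> n \<and> coeff (poly_in_var Q 0 (jet f 0)) (degx Q) \<noteq> 0"
proof -
  obtain m where m: "m \<in> Poly_Mapping.keys Q" "Poly_Mapping.lookup m 0 = degx Q"
    using degx_attained[OF assms(2)] by blast
  define S where "S = coeff_in_var Q 0 (degx Q)"
  have vars_S: "vars S \<subseteq> {1..Suc n}"
    using vars_coeff_in_var[of Q 0] assms(1)
    by (fastforce simp: S_def vars_le_def vars_def)
  obtain c where "meval S c \<noteq> 0"
    using ex_meval_nonzero coeff_in_var_nonzero[OF m(1), of 0] m(2) by (auto simp: S_def)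
  moreover obtain f where "degree f \<le> n" "\<forall>k\<in>{1..Suc n}. jet f 0 k = c k"
    using ex_poly_with_jet by blast
  moreover from this vars_S have "meval S (jet f 0) = meval S c"
    by (intro meval_cong_vars) auto
  ultimately show ?thesis
    by (metis S_def coeff_poly_in_var)
qed

lemma inP_poly_iff: "inP s (poly p) \<longleftrightarrow> p = 0 \<or> int (degree p) \<le> s"
  by (auto simp: inP_def poly_eq_poly_eq_iff)

theorem mainTheorem6:
  fixes n :: nat and T Q :: mpoly
  assumes "n \<ge> 1"
    and "vars_le (Suc n) T"
    and "T \<noteq> 0"
    and "vars_le (Suc n) Q"
    and "T = msubst Q (\<lambda>k. if k = 0 then mvar 0 else vpoly n (k - 1))"
  shows "maps_into T n (int (degx Q)) \<and> \<not> maps_into T n (int (degx Q) - 1)"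
proof
  have act_T: "act T f = poly (poly_in_var Q 0 (jet f 0))" if "degree f \<le> n" for f
    using act_msubst_vpoly[OF that] assms(5) by simp
  show "maps_into T n (int (degx Q))"
    by (simp add: maps_into_def act_T inP_poly_iff degree_poly_in_var_0_le_degx)
  have "Q \<noteq> 0"
    using assms(3,5) by (auto simp: msubst_def)
  then obtain f where f: "degree f \<le> n" "coeff (poly_in_var Q 0 (jet f 0)) (degx Q) \<noteq> 0"
    using ex_poly_coeff_degx_nonzero assms(4) by blast
  then have "\<not> inP (int (degx Q) - 1) (act T f)"
    by (auto simp: act_T inP_poly_iff dest: le_degree)
  with f(1) show "\<not> maps_into T n (int (degx Q) - 1)"
    by (auto simp: maps_into_def)
qed

end
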